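(* Let $f\colon X\to X$ be an expansive homeomorphism of a compact metric space $X$. Then $f$ admits a catenary local metric.
   Context: A homeomorphism $f$ of a compact metric space $(X,\operatorname{dist})$ is expansive if there is $\delta>0$ such that $\operatorname{dist}(f^n(x),f^n(y))\le\delta$ for all $n\in\mathbb{Z}$ implies $x=y$. Let $X^3_\delta=\{(x,y,z)\in X^3: y,z\in B_\delta(x)\}$, where $B_\delta(x)$ is the open ball of radius $\delta$ about $x$. A local metric on $X$ is a continuous function $D\colon X^3_\delta\to\mathbb{R}$ (for some $\delta>0$), written $D(x,y,z)=D_x(y,z)$, such that: (1) each $D_x$ is a metric on $B_\delta(x)$; (2) $D_x(x,y)=D_y(x,y)$ whenever $\operatorname{dist}(x,y)<\delta$. It is catenary if $\ddot D_x=D_x$ for all $x$, where $\ddot D_x(y,z)=D_{f(x)}(f(y),f(z))-2D_x(y,z)+D_{f^{-1}(x)}(f^{-1}(y),f^{-1}(z))$ whenever all these terms are defined. *)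

theory Defs
  imports "HOL-Analysis.Analysis"
begin

definition zpow :: "'a set \<Rightarrow> ('a \<Rightarrow> 'a) \<Rightarrow> int \<Rightarrow> 'a \<Rightarrow> 'a" where
  "zpow X f n = (if 0 \<le> n then f ^^ nat n else (inv_into X f) ^^ nat (- n))"

definition expansive_homeo :: "'a::metric_space set \<Rightarrow> ('a \<Rightarrow> 'a) \<Rightarrow> bool" where
  "expansive_homeo X f \<longleftrightarrow> (\<exists>g. homeomorphism X X f g) \<and>
     (\<exists>\<delta>>0. \<forall>x\<in>X. \<forall>y\<in>X.
        (\<forall>n::int. dist (zpow X f n x) (zpow X f n y) \<le> \<delta>) \<longrightarrow> x = y)"

definition X3 :: "'a::metric_space set \<Rightarrow> real \<Rightarrow> ('a \<times> 'a \<times> 'a) set" where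
  "X3 X \<delta> = {(x, y, z). x \<in> X \<and> y \<in> X \<and> z \<in> X \<and> y \<in> ball x \<delta> \<and> z \<in> ball x \<delta>}"

definition local_metric :: "'a::metric_space set \<Rightarrow> real \<Rightarrow> ('a \<Rightarrow> 'a \<Rightarrow> 'a \<Rightarrow> real) \<Rightarrow> bool" where
  "local_metric X \<delta> D \<longleftrightarrow> \<delta> > 0 \<and>
     continuous_on (X3 X \<delta>) (\<lambda>(x, y, z). D x y z) \<and>
     (\<forall>x\<in>X. \<forall>y\<in>X \<inter> ball x \<delta>. \<forall>z\<in>X \<inter> ball x \<delta>.
        0 \<le> D x y z \<and> (D x y z = 0 \<longleftrightarrow> y = z) \<and> D x y z = D x z y) \<and>
     (\<forall>x\<in>X. \<forall>y\<in>X \<inter> ball x \<delta>. \<forall>z\<in>X \<inter> ball x \<delta>. \<forall>w\<in>X \<inter> ball x \<delta>.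
        D x y w \<le> D x y z + D x z w) \<and>
     (\<forall>x\<in>X. \<forall>y\<in>X. dist x y < \<delta> \<longrightarrow> D x x y = D y x y)"

definition catenary :: "'a::metric_space set \<Rightarrow> ('a \<Rightarrow> 'a) \<Rightarrow> real \<Rightarrow> ('a \<Rightarrow> 'a \<Rightarrow> 'a \<Rightarrow> real) \<Rightarrow> bool" where
  "catenary X f \<delta> D \<longleftrightarrow>
     (\<forall>x y z. (x, y, z) \<in> X3 X \<delta> \<and> (f x, f y, f z) \<in> X3 X \<delta> \<and>
        (inv_into X f x, inv_into X f y, inv_into X f z) \<in> X3 X \<delta> \<longrightarrow>
        D (f x) (f y) (f z) - 2 * D x y z
          + D (inv_into X f x) (inv_into X f y) (inv_into X f z) = D x y z)"

end

theory Submission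
  imports Defs
begin

text \<open>
  For \<open>x \<in> X\<close> the function \<open>h\<^sub>x(y, z) = min d(y, z) ((d(x, y) - \<delta>)\<^sup>+ + (d(x, z) - \<delta>)\<^sup>+)\<close>
  is a pseudometric in \<open>(y, z)\<close> that vanishes for \<open>y, z \<in> B\<^sub>\<delta>(x)\<close> and is positive when
  \<open>d(y, z) > 2\<delta>\<close>. For \<open>0 < \<lambda> < 1\<close> put
    \<open>D\<^sub>x(y, z) = \<Sum>\<^bsub>k \<ge> 0\<^esub> \<lambda>\<^sup>k h\<^bsub>f\<^sup>k x\<^esub>(f\<^sup>k y, f\<^sup>k z) + \<Sum>\<^bsub>k \<ge> 1\<^esub> \<lambda>\<^sup>k h\<^bsub>f\<^sup>-\<^sup>k x\<^esub>(f\<^sup>-\<^sup>k y, f\<^sup>-\<^sup>k z)\<close>.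
  The series converge uniformly, so \<open>D\<close> is continuous, and expansiveness with constant \<open>2\<delta>\<close>
  turns the pseudometrics \<open>D\<^sub>x\<close> into metrics. Wherever the second difference is defined,
  \<open>y, z \<in> B\<^sub>\<delta>(x)\<close>, so the \<open>k = 0\<close> term vanishes and moving along the orbit by \<open>f\<^sup>\<plusminus>\<^sup>1\<close>
  multiplies the forward sum by \<open>\<lambda>\<^sup>\<mp>\<^sup>1\<close> and the backward sum by \<open>\<lambda>\<^sup>\<plusminus>\<^sup>1\<close>. Hence
  the second difference of \<open>D\<close> is \<open>(\<lambda> + 1/\<lambda> - 2) D\<close>, which is \<open>D\<close> for \<open>\<lambda> = (3 - \<surd>5)/2\<close>.
\<close>

definition excess_dist :: "real \<Rightarrow> 'a::metric_space \<Rightarrow> 'a \<Rightarrow> real" where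
  "excess_dist \<delta> a b = max 0 (dist a b - \<delta>)"

definition cutoff_dist :: "real \<Rightarrow> 'a::metric_space \<Rightarrow> 'a \<Rightarrow> 'a \<Rightarrow> real" where
  "cutoff_dist \<delta> a b c = min (dist b c) (excess_dist \<delta> a b + excess_dist \<delta> a c)"

definition orbit_sum :: "real \<Rightarrow> real \<Rightarrow> ('a::metric_space \<Rightarrow> 'a) \<Rightarrow> 'a \<Rightarrow> 'a \<Rightarrow> 'a \<Rightarrow> real" where
  "orbit_sum l \<delta> p x y z = (\<Sum>k. l ^ k * cutoff_dist \<delta> ((p ^^ k) x) ((p ^^ k) y) ((p ^^ k) z))"

definition two_sided_orbit_sum ::
    "real \<Rightarrow> real \<Rightarrow> ('a::metric_space \<Rightarrow> 'a) \<Rightarrow> ('a \<Rightarrow> 'a) \<Rightarrow> 'a \<Rightarrow> 'a \<Rightarrow> 'a \<Rightarrow> real" where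
  "two_sided_orbit_sum l \<delta> f g x y z = orbit_sum l \<delta> f x y z + l * orbit_sum l \<delta> g (g x) (g y) (g z)"

subsection \<open>The cut-off distance\<close>

lemma excess_dist_nonneg: "0 \<le> excess_dist \<delta> a b"
  by (simp add: excess_dist_def)

lemma excess_dist_lipschitz: "excess_dist \<delta> a b \<le> excess_dist \<delta> a c + dist b c"
  unfolding excess_dist_def using dist_triangle[of a b c] dist_commute[of c b] by simp

lemma cutoff_dist_nonneg: "0 \<le> cutoff_dist \<delta> a b c"
  unfolding cutoff_dist_def using excess_dist_nonneg[of \<delta> a] by simp

lemma cutoff_dist_le_dist: "cutoff_dist \<delta> a b c \<le> dist b c"
  by (simp add: cutoff_dist_def)

lemma cutoff_dist_same: "cutoff_dist \<delta> a b b = 0"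
  unfolding cutoff_dist_def using excess_dist_nonneg[of \<delta> a b] by simp

lemma cutoff_dist_commute: "cutoff_dist \<delta> a b c = cutoff_dist \<delta> a c b"
  by (simp add: cutoff_dist_def dist_commute add.commute)

lemma cutoff_dist_triangle: "cutoff_dist \<delta> a b w \<le> cutoff_dist \<delta> a b c + cutoff_dist \<delta> a c w"
  using dist_triangle[of b w c] excess_dist_lipschitz[of \<delta> a b c]
    excess_dist_lipschitz[of \<delta> a w c] excess_dist_nonneg[of \<delta> a c]
  by (simp add: cutoff_dist_def dist_commute min_def)

lemma cutoff_dist_base_swap: "cutoff_dist \<delta> a a b = cutoff_dist \<delta> b a b"
  by (simp add: cutoff_dist_def excess_dist_def dist_commute)

lemma cutoff_dist_ball: "dist a b < \<delta> \<Longrightarrow> dist a c < \<delta> \<Longrightarrow> cutoff_dist \<delta> a b c = 0"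
  by (simp add: cutoff_dist_def excess_dist_def)

lemma cutoff_dist_pos:
  assumes "0 \<le> \<delta>" "2 * \<delta> < dist b c"
  shows "0 < cutoff_dist \<delta> a b c"
proof -
  have "dist b c \<le> dist a b + dist a c"
    using dist_triangle[of b c a] by (simp add: dist_commute)
  then have "0 < excess_dist \<delta> a b + excess_dist \<delta> a c"
    using assms excess_dist_nonneg[of \<delta> a] unfolding excess_dist_def by linarith
  moreover have "0 < dist b c"
    using assms by linarith
  ultimately show ?thesis
    by (simp add: cutoff_dist_def)
qed

lemma continuous_on_cutoff_dist:
  "continuous_on A a \<Longrightarrow> continuous_on A b \<Longrightarrow> continuous_on A c \<Longrightarrow>
   continuous_on A (\<lambda>t. cutoff_dist \<delta> (a t) (b t) (c t))"
  unfolding cutoff_dist_def excess_dist_def by (intro continuous_intros)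

subsection \<open>Weighted sums along an orbit\<close>

lemma funpow_image_subset: "p ` X \<subseteq> X \<Longrightarrow> (p ^^ k) ` X \<subseteq> X"
  by (induction k) auto

lemma continuous_on_funpow:
  assumes "p ` X \<subseteq> X" "continuous_on X p"
  shows "continuous_on X (p ^^ k)"
proof (induction k)
  case (Suc k)
  then show ?case
    using continuous_on_compose[OF Suc.IH continuous_on_subset[OF assms(2)]]
      funpow_image_subset[OF assms(1)] by (simp add: o_def)
qed (simp add: continuous_on_id)

lemma orbit_term_bound:
  assumes "bounded X" "p ` X \<subseteq> X" "0 \<le> l" "y \<in> X" "z \<in> X"
  shows "norm (l ^ k * cutoff_dist \<delta> ((p ^^ k) x) ((p ^^ k) y) ((p ^^ k) z)) \<le> l ^ k * diameter X"
proof -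
  have "(p ^^ k) y \<in> X" "(p ^^ k) z \<in> X"
    using assms funpow_image_subset[OF assms(2)] by blast+
  then have "cutoff_dist \<delta> ((p ^^ k) x) ((p ^^ k) y) ((p ^^ k) z) \<le> diameter X"
    using cutoff_dist_le_dist diameter_bounded_bound[OF assms(1)] order_trans by blast
  moreover have "0 \<le> l ^ k * cutoff_dist \<delta> ((p ^^ k) x) ((p ^^ k) y) ((p ^^ k) z)"
    by (intro mult_nonneg_nonneg zero_le_power cutoff_dist_nonneg assms(3))
  ultimately show ?thesis
    using assms(3) by (simp add: mult_left_mono)
qed

lemma summable_orbit_terms:
  assumes "bounded X" "p ` X \<subseteq> X" "0 \<le> l" "l < 1" "y \<in> X" "z \<in> X"
  shows "summable (\<lambda>k. l ^ k * cutoff_dist \<delta> ((p ^^ k) x) ((p ^^ k) y) ((p ^^ k) z))"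
proof (rule summable_comparison_test')
  show "summable (\<lambda>k. l ^ k * diameter X)"
    using assms(3,4) by (intro summable_mult2 summable_geometric) simp
  show "norm (l ^ k * cutoff_dist \<delta> ((p ^^ k) x) ((p ^^ k) y) ((p ^^ k) z)) \<le> l ^ k * diameter X"
    for k
    by (rule orbit_term_bound[OF assms(1-3,5,6)])
qed

lemma orbit_sum_unfold:
  assumes "bounded X" "p ` X \<subseteq> X" "0 \<le> l" "l < 1" "y \<in> X" "z \<in> X"
  shows "orbit_sum l \<delta> p x y z = cutoff_dist \<delta> x y z + l * orbit_sum l \<delta> p (p x) (p y) (p z)"
proof -
  have "p y \<in> X" "p z \<in> X" using assms by auto
  then show ?thesis
    using suminf_split_head[OF summable_orbit_terms[OF assms]]
      suminf_mult[OF summable_orbit_terms[OF assms(1-4), of "p y" "p z" \<delta> "p x"], of l]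
    unfolding orbit_sum_def by (simp add: funpow_swap1 mult.assoc)
qed

lemma orbit_sum_nonneg:
  assumes "bounded X" "p ` X \<subseteq> X" "0 \<le> l" "l < 1" "y \<in> X" "z \<in> X"
  shows "0 \<le> orbit_sum l \<delta> p x y z"
  unfolding orbit_sum_def
  by (intro suminf_nonneg summable_orbit_terms[OF assms] mult_nonneg_nonneg zero_le_power
      cutoff_dist_nonneg assms(3))

lemma orbit_sum_pos:
  assumes "bounded X" "p ` X \<subseteq> X" "0 < l" "l < 1" "y \<in> X" "z \<in> X" "0 \<le> \<delta>"
    and "2 * \<delta> < dist ((p ^^ k) y) ((p ^^ k) z)"
  shows "0 < orbit_sum l \<delta> p x y z"
  unfolding orbit_sum_def
proof (rule suminf_pos2[where i = k])
  show "summable (\<lambda>k. l ^ k * cutoff_dist \<delta> ((p ^^ k) x) ((p ^^ k) y) ((p ^^ k) z))"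
    using assms by (intro summable_orbit_terms) auto
  show "0 \<le> l ^ n * cutoff_dist \<delta> ((p ^^ n) x) ((p ^^ n) y) ((p ^^ n) z)" for n
    using assms(3) by (intro mult_nonneg_nonneg zero_le_power cutoff_dist_nonneg) simp
  show "0 < l ^ k * cutoff_dist \<delta> ((p ^^ k) x) ((p ^^ k) y) ((p ^^ k) z)"
    using assms by (intro mult_pos_pos zero_less_power cutoff_dist_pos) auto
qed

lemma orbit_sum_same: "orbit_sum l \<delta> p x y y = 0"
  by (simp add: orbit_sum_def cutoff_dist_same)

lemma orbit_sum_commute: "orbit_sum l \<delta> p x y z = orbit_sum l \<delta> p x z y"
  unfolding orbit_sum_def by (subst cutoff_dist_commute) (rule refl)

lemma orbit_sum_base_swap: "orbit_sum l \<delta> p x x y = orbit_sum l \<delta> p y x y"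
  unfolding orbit_sum_def by (subst cutoff_dist_base_swap) (rule refl)

lemma orbit_sum_triangle:
  assumes "bounded X" "p ` X \<subseteq> X" "0 \<le> l" "l < 1" "y \<in> X" "z \<in> X" "w \<in> X"
  shows "orbit_sum l \<delta> p x y w \<le> orbit_sum l \<delta> p x y z + orbit_sum l \<delta> p x z w"
proof -
  note summable = summable_orbit_terms[OF assms(1-4)]
  have termwise: "l ^ k * cutoff_dist \<delta> ((p ^^ k) x) ((p ^^ k) y) ((p ^^ k) w)
      \<le> l ^ k * cutoff_dist \<delta> ((p ^^ k) x) ((p ^^ k) y) ((p ^^ k) z)
         + l ^ k * cutoff_dist \<delta> ((p ^^ k) x) ((p ^^ k) z) ((p ^^ k) w)" for k
    unfolding distrib_left [symmetric]
    using assms(3) by (intro mult_left_mono cutoff_dist_triangle) simp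
  have "orbit_sum l \<delta> p x y w \<le>
      (\<Sum>k. l ^ k * cutoff_dist \<delta> ((p ^^ k) x) ((p ^^ k) y) ((p ^^ k) z)
         + l ^ k * cutoff_dist \<delta> ((p ^^ k) x) ((p ^^ k) z) ((p ^^ k) w))"
    unfolding orbit_sum_def by (intro suminf_le termwise summable_add summable assms)
  also have "\<dots> = orbit_sum l \<delta> p x y z + orbit_sum l \<delta> p x z w"
    unfolding orbit_sum_def by (intro suminf_add [symmetric] summable assms)
  finally show ?thesis .
qed

lemma continuous_on_orbit_sum:
  assumes "bounded X" "p ` X \<subseteq> X" "continuous_on X p" "0 \<le> l" "l < 1"
    and "continuous_on A a" "continuous_on A b" "continuous_on A c"
    and "a ` A \<subseteq> X" "b ` A \<subseteq> X" "c ` A \<subseteq> X"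
  shows "continuous_on A (\<lambda>t. orbit_sum l \<delta> p (a t) (b t) (c t))"
proof -
  let ?term = "\<lambda>k t. l ^ k * cutoff_dist \<delta> ((p ^^ k) (a t)) ((p ^^ k) (b t)) ((p ^^ k) (c t))"
  have "norm (?term k t) \<le> l ^ k * diameter X" if "t \<in> A" for k t
    using that assms(10,11) by (intro orbit_term_bound[OF assms(1,2,4)]) auto
  moreover have "summable (\<lambda>k. l ^ k * diameter X)"
    using assms(4,5) by (intro summable_mult2 summable_geometric) simp
  ultimately have "uniform_limit A (\<lambda>n t. \<Sum>k<n. ?term k t) (\<lambda>t. \<Sum>k. ?term k t) sequentially"
    by (rule Weierstrass_m_test)
  moreover have "continuous_on A (?term k)" for k
  proof -
    have "continuous_on A (\<lambda>t. (p ^^ k) (a t))" "continuous_on A (\<lambda>t. (p ^^ k) (b t))"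
      "continuous_on A (\<lambda>t. (p ^^ k) (c t))"
      using assms(6-11) by (auto intro: continuous_on_compose2[OF continuous_on_funpow[OF assms(2,3)]])
    then show ?thesis
      by (intro continuous_on_mult_left continuous_on_cutoff_dist)
  qed
  then have "\<forall>\<^sub>F n in sequentially. continuous_on A (\<lambda>t. \<Sum>k<n. ?term k t)"
    by (intro always_eventually allI continuous_on_sum) auto
  ultimately show ?thesis
    unfolding orbit_sum_def by (intro uniform_limit_theorem) auto
qed

subsection \<open>The two-sided orbit sum\<close>

lemma homeomorphism_inv_into_eq:
  assumes "homeomorphism X Y f g" "y \<in> Y"
  shows "inv_into X f y = g y"
proof -
  have "g y \<in> X" "f (g y) = y"
    using assms homeomorphism_image2 homeomorphism_apply2 by blast+
  moreover have "inj_on f X"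
    using homeomorphism_apply1[OF assms(1)] by (rule inj_on_inverseI)
  ultimately show ?thesis
    by (metis inv_into_f_f)
qed

lemma homeomorphism_inv_into:
  assumes "homeomorphism X Y f g"
  shows "homeomorphism X Y f (inv_into X f)"
  using assms by (rule homeomorphism_cong) (simp_all add: homeomorphism_inv_into_eq[OF assms])

lemma two_sided_orbit_sum_nonneg:
  assumes bounded: "bounded X" and homeo: "homeomorphism X X f g"
    and l_pos: "0 < l" and l_less_1: "l < 1"
    and yz: "y \<in> X" "z \<in> X"
  shows "0 \<le> two_sided_orbit_sum l \<delta> f g x y z"
proof -
  note maps_into = homeomorphism_image1[OF homeo, THEN equalityD1]
    homeomorphism_image2[OF homeo, THEN equalityD1]
  have l_nonneg: "0 \<le> l"
    using l_pos by simp
  have "g y \<in> X" "g z \<in> X"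
    using yz maps_into by auto
  then show ?thesis
    using orbit_sum_nonneg[OF bounded maps_into(1) l_nonneg l_less_1 yz]
      orbit_sum_nonneg[OF bounded maps_into(2) l_nonneg l_less_1] l_nonneg
    by (simp add: two_sided_orbit_sum_def)
qed

lemma two_sided_orbit_sum_pos:
  assumes bounded: "bounded X" and homeo: "homeomorphism X X f g"
    and l_pos: "0 < l" and l_less_1: "l < 1"
    and "0 \<le> \<delta>" "y \<in> X" "z \<in> X"
    and "(\<exists>k. 2 * \<delta> < dist ((f ^^ k) y) ((f ^^ k) z)) \<or>
      (\<exists>k. 2 * \<delta> < dist ((g ^^ Suc k) y) ((g ^^ Suc k) z))"
  shows "0 < two_sided_orbit_sum l \<delta> f g x y z"
proof -
  note maps_into = homeomorphism_image1[OF homeo, THEN equalityD1]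
    homeomorphism_image2[OF homeo, THEN equalityD1]
  have l_nonneg: "0 \<le> l"
    using l_pos by simp
  have g_in_X: "g y \<in> X" "g z \<in> X"
    using assms(6,7) maps_into by auto
  have f_part: "0 \<le> orbit_sum l \<delta> f x y z"
    using orbit_sum_nonneg[OF bounded maps_into(1) l_nonneg l_less_1 assms(6,7)] .
  have g_part: "0 \<le> l * orbit_sum l \<delta> g (g x) (g y) (g z)"
    using orbit_sum_nonneg[OF bounded maps_into(2) l_nonneg l_less_1 g_in_X] l_nonneg by simp
  from assms(8) show ?thesis
  proof (elim disjE exE)
    fix k
    assume "2 * \<delta> < dist ((f ^^ k) y) ((f ^^ k) z)"
    then have "0 < orbit_sum l \<delta> f x y z"
      by (rule orbit_sum_pos[OF bounded maps_into(1) l_pos l_less_1 assms(6,7,5)])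
    with g_part show ?thesis
      unfolding two_sided_orbit_sum_def by simp
  next
    fix k
    assume "2 * \<delta> < dist ((g ^^ Suc k) y) ((g ^^ Suc k) z)"
    then have "2 * \<delta> < dist ((g ^^ k) (g y)) ((g ^^ k) (g z))"
      by (simp only: funpow_Suc_right o_apply)
    then have "0 < orbit_sum l \<delta> g (g x) (g y) (g z)"
      by (rule orbit_sum_pos[OF bounded maps_into(2) l_pos l_less_1 g_in_X assms(5)])
    with f_part l_pos show ?thesis
      unfolding two_sided_orbit_sum_def by (simp add: add_nonneg_pos)
  qed
qed

lemma continuous_on_two_sided_orbit_sum:
  assumes bounded: "bounded X" and homeo: "homeomorphism X X f g"
    and l_pos: "0 < l" and l_less_1: "l < 1"
  shows "continuous_on (X \<times> X \<times> X) (\<lambda>(x, y, z). two_sided_orbit_sum l \<delta> f g x y z)"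
proof -
  note maps_into = homeomorphism_image1[OF homeo, THEN equalityD1]
    homeomorphism_image2[OF homeo, THEN equalityD1]
  have l_nonneg: "0 \<le> l"
    using l_pos by simp
  let ?T = "X \<times> X \<times> X"
  have cont: "continuous_on X f" "continuous_on X g"
    using homeo by (simp_all add: homeomorphism_def)
  have proj: "continuous_on ?T fst" "continuous_on ?T (\<lambda>t. fst (snd t))"
    "continuous_on ?T (\<lambda>t. snd (snd t))"
    by (intro continuous_intros)+
  have proj_into: "fst ` ?T \<subseteq> X" "(\<lambda>t. fst (snd t)) ` ?T \<subseteq> X" "(\<lambda>t. snd (snd t)) ` ?T \<subseteq> X"
    by auto
  have g_proj: "continuous_on ?T (\<lambda>t. g (fst t))" "continuous_on ?T (\<lambda>t. g (fst (snd t)))"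
    "continuous_on ?T (\<lambda>t. g (snd (snd t)))"
    using proj proj_into by (auto intro: continuous_on_compose2[OF cont(2)])
  have g_proj_into: "(\<lambda>t. g (fst t)) ` ?T \<subseteq> X" "(\<lambda>t. g (fst (snd t))) ` ?T \<subseteq> X"
    "(\<lambda>t. g (snd (snd t))) ` ?T \<subseteq> X"
    using maps_into by auto
  have "continuous_on ?T (\<lambda>t. orbit_sum l \<delta> f (fst t) (fst (snd t)) (snd (snd t)))"
    by (rule continuous_on_orbit_sum[OF bounded maps_into(1) cont(1) l_nonneg l_less_1 proj proj_into])
  moreover have "continuous_on ?T
      (\<lambda>t. orbit_sum l \<delta> g (g (fst t)) (g (fst (snd t))) (g (snd (snd t))))"
    by (rule continuous_on_orbit_sum[OF bounded maps_into(2) cont(2) l_nonneg l_less_1 g_proj g_proj_into])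
  ultimately show ?thesis
    unfolding two_sided_orbit_sum_def case_prod_beta by (intro continuous_on_add continuous_on_mult_left)
qed

lemma two_sided_orbit_sum_triangle:
  assumes bounded: "bounded X" and homeo: "homeomorphism X X f g"
    and l_pos: "0 < l" and l_less_1: "l < 1"
    and yzw: "y \<in> X" "z \<in> X" "w \<in> X"
  shows "two_sided_orbit_sum l \<delta> f g x y w
    \<le> two_sided_orbit_sum l \<delta> f g x y z + two_sided_orbit_sum l \<delta> f g x z w"
proof -
  note maps_into = homeomorphism_image1[OF homeo, THEN equalityD1]
    homeomorphism_image2[OF homeo, THEN equalityD1]
  have l_nonneg: "0 \<le> l"
    using l_pos by simp
  have "g y \<in> X" "g z \<in> X" "g w \<in> X"
    using yzw maps_into by auto
  then have f_tri: "orbit_sum l \<delta> f x y w \<le> orbit_sum l \<delta> f x y z + orbit_sum l \<delta> f x z w"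
    and g_tri: "orbit_sum l \<delta> g (g x) (g y) (g w)
      \<le> orbit_sum l \<delta> g (g x) (g y) (g z) + orbit_sum l \<delta> g (g x) (g z) (g w)"
    using yzw by (simp_all add: orbit_sum_triangle[OF bounded maps_into(1) l_nonneg l_less_1]
        orbit_sum_triangle[OF bounded maps_into(2) l_nonneg l_less_1])
  have "l * orbit_sum l \<delta> g (g x) (g y) (g w)
      \<le> l * orbit_sum l \<delta> g (g x) (g y) (g z) + l * orbit_sum l \<delta> g (g x) (g z) (g w)"
    unfolding distrib_left [symmetric] using g_tri l_nonneg by (rule mult_left_mono)
  with f_tri show ?thesis
    unfolding two_sided_orbit_sum_def by linarith
qed

lemma two_sided_orbit_sum_commute:
  "two_sided_orbit_sum l \<delta> f g x y z = two_sided_orbit_sum l \<delta> f g x z y"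
  by (simp add: two_sided_orbit_sum_def orbit_sum_commute[of _ _ _ x y] orbit_sum_commute[of _ _ _ "g x" "g y"])

lemma two_sided_orbit_sum_base_swap:
  "two_sided_orbit_sum l \<delta> f g x x y = two_sided_orbit_sum l \<delta> f g y x y"
  unfolding two_sided_orbit_sum_def by (metis orbit_sum_base_swap)

lemma local_metric_two_sided_orbit_sum:
  assumes bounded: "bounded X" and homeo: "homeomorphism X X f g"
    and l_pos: "0 < l" and l_less_1: "l < 1"
    and "0 < \<delta>"
    and separating: "\<And>y z. y \<in> X \<Longrightarrow> z \<in> X \<Longrightarrow> y \<noteq> z \<Longrightarrow>
      (\<exists>k. 2 * \<delta> < dist ((f ^^ k) y) ((f ^^ k) z)) \<or>
      (\<exists>k. 2 * \<delta> < dist ((g ^^ Suc k) y) ((g ^^ Suc k) z))"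
  shows "local_metric X \<delta> (two_sided_orbit_sum l \<delta> f g)"
proof -
  note setting = bounded homeo l_pos l_less_1
  show ?thesis
    unfolding local_metric_def
  proof (intro conjI ballI allI impI)
    show "continuous_on (X3 X \<delta>) (\<lambda>(x, y, z). two_sided_orbit_sum l \<delta> f g x y z)"
      by (rule continuous_on_subset[OF continuous_on_two_sided_orbit_sum[OF setting]])
        (auto simp: X3_def)
  next
    fix x y z
    assume "x \<in> X" "y \<in> X \<inter> ball x \<delta>" "z \<in> X \<inter> ball x \<delta>"
    then have "y \<in> X" "z \<in> X"
      by auto
    then show "0 \<le> two_sided_orbit_sum l \<delta> f g x y z"
      by (rule two_sided_orbit_sum_nonneg[OF setting])
    show "two_sided_orbit_sum l \<delta> f g x y z = 0 \<longleftrightarrow> y = z"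
    proof
      assume zero: "two_sided_orbit_sum l \<delta> f g x y z = 0"
      show "y = z"
      proof (rule ccontr)
        assume "y \<noteq> z"
        then have "0 < two_sided_orbit_sum l \<delta> f g x y z"
          using two_sided_orbit_sum_pos[OF setting] separating \<open>y \<in> X\<close> \<open>z \<in> X\<close> assms(5)
          by simp
        with zero show False
          by simp
      qed
    qed (simp add: two_sided_orbit_sum_def orbit_sum_same)
    show "two_sided_orbit_sum l \<delta> f g x y z = two_sided_orbit_sum l \<delta> f g x z y"
      by (rule two_sided_orbit_sum_commute)
  next
    fix x y z w
    assume "x \<in> X" "y \<in> X \<inter> ball x \<delta>" "z \<in> X \<inter> ball x \<delta>" "w \<in> X \<inter> ball x \<delta>"
    then show "two_sided_orbit_sum l \<delta> f g x y w
        \<le> two_sided_orbit_sum l \<delta> f g x y z + two_sided_orbit_sum l \<delta> f g x z w"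
      by (intro two_sided_orbit_sum_triangle[OF setting]) auto
  next
    fix x y
    show "two_sided_orbit_sum l \<delta> f g x x y = two_sided_orbit_sum l \<delta> f g y x y"
      by (rule two_sided_orbit_sum_base_swap)
  qed (rule assms(5))
qed

lemma catenary_two_sided_orbit_sum:
  assumes bounded: "bounded X" and homeo: "homeomorphism X X f g"
    and l_pos: "0 < l" and l_less_1: "l < 1"
    and weight: "l + 1 / l = 3"
  shows "catenary X f \<delta> (two_sided_orbit_sum l \<delta> f g)"
  unfolding catenary_def
proof (intro allI impI, elim conjE)
  note maps_into = homeomorphism_image1[OF homeo, THEN equalityD1]
    homeomorphism_image2[OF homeo, THEN equalityD1]
  have l_nonneg: "0 \<le> l"
    using l_pos by simp
  fix x y z
  assume "(x, y, z) \<in> X3 X \<delta>"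
  then have in_X: "x \<in> X" "y \<in> X" "z \<in> X" and near: "dist x y < \<delta>" "dist x z < \<delta>"
    by (auto simp: X3_def)
  have g_in_X: "g y \<in> X" "g z \<in> X"
    using in_X maps_into by auto
  have gf: "g (f x) = x" "g (f y) = y" "g (f z) = z" and fg: "f (g x) = x" "f (g y) = y" "f (g z) = z"
    using homeo in_X by (simp_all add: homeomorphism_apply1 homeomorphism_apply2)
  let ?D = "two_sided_orbit_sum l \<delta> f g"
  define A where "A = orbit_sum l \<delta> f x y z"
  define B where "B = orbit_sum l \<delta> g x y z"
  define h where "h = cutoff_dist \<delta> (g x) (g y) (g z)"
  have "cutoff_dist \<delta> x y z = 0"
    using near by (rule cutoff_dist_ball)
  then have A_unfold: "A = l * orbit_sum l \<delta> f (f x) (f y) (f z)"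
    and B_unfold: "B = l * orbit_sum l \<delta> g (g x) (g y) (g z)"
    unfolding A_def B_def
    using orbit_sum_unfold[OF bounded maps_into(1) l_nonneg l_less_1 in_X(2,3), of \<delta> x]
      orbit_sum_unfold[OF bounded maps_into(2) l_nonneg l_less_1 in_X(2,3), of \<delta> x]
    by simp_all
  have "orbit_sum l \<delta> f (g x) (g y) (g z) = h + l * A"
    and "orbit_sum l \<delta> g (g x) (g y) (g z) = h + l * orbit_sum l \<delta> g (g (g x)) (g (g y)) (g (g z))"
    unfolding A_def h_def
    using orbit_sum_unfold[OF bounded maps_into(1) l_nonneg l_less_1 g_in_X, of \<delta> "g x"]
      orbit_sum_unfold[OF bounded maps_into(2) l_nonneg l_less_1 g_in_X, of \<delta> "g x"] fg
    by simp_all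
  then have "?D (g x) (g y) (g z) = l * A + B / l"
    using B_unfold l_pos by (simp add: two_sided_orbit_sum_def field_simps)
  moreover have "?D (f x) (f y) (f z) = A / l + l * B"
    using A_unfold l_pos by (simp add: two_sided_orbit_sum_def gf B_def field_simps)
  moreover have "?D x y z = A + B"
    using B_unfold by (simp add: two_sided_orbit_sum_def A_def)
  ultimately have "?D (f x) (f y) (f z) - 2 * ?D x y z + ?D (g x) (g y) (g z)
      = (l + 1 / l) * (A + B) - 2 * ?D x y z"
    by (simp add: algebra_simps add_divide_distrib)
  also have "\<dots> = ?D x y z"
    using weight \<open>?D x y z = A + B\<close> by simp
  finally show "?D (f x) (f y) (f z) - 2 * ?D x y z
      + ?D (inv_into X f x) (inv_into X f y) (inv_into X f z) = ?D x y z"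
    using in_X by (simp add: homeomorphism_inv_into_eq[OF homeo])
qed

lemma exists_catenary_weight: "\<exists>l::real. 0 < l \<and> l < 1 \<and> l + 1 / l = 3"
proof (intro exI conjI)
  have "2 < sqrt 5" "sqrt 5 < 3"
    by (simp_all add: real_less_rsqrt real_less_lsqrt)
  then show "0 < (3 - sqrt 5) / 2" "(3 - sqrt 5) / 2 < 1"
    by simp_all
  show "(3 - sqrt 5) / 2 + 1 / ((3 - sqrt 5) / 2) = 3"
    using \<open>sqrt 5 < 3\<close> by (simp add: field_simps)
qed

lemma expansive_separates_orbits:
  assumes expansive: "\<forall>x\<in>X. \<forall>y\<in>X. (\<forall>n::int. dist (zpow X f n x) (zpow X f n y) \<le> e) \<longrightarrow> x = y"
    and "y \<in> X" "z \<in> X" "y \<noteq> z"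
  shows "(\<exists>k. e < dist ((f ^^ k) y) ((f ^^ k) z)) \<or>
    (\<exists>k. e < dist ((inv_into X f ^^ Suc k) y) ((inv_into X f ^^ Suc k) z))"
proof -
  obtain n :: int where n: "e < dist (zpow X f n y) (zpow X f n z)"
    using assms by (meson not_le)
  show ?thesis
  proof (cases "0 \<le> n")
    case True
    then show ?thesis
      using n by (auto simp: zpow_def)
  next
    case False
    then have "zpow X f n = inv_into X f ^^ Suc (nat (- n) - 1)"
      by (simp add: zpow_def Suc_diff_1)
    then show ?thesis
      using n by auto
  qed
qed

theorem mainTheorem19:
  fixes X :: "'a::metric_space set" and f :: "'a \<Rightarrow> 'a"
  assumes "compact X" and "expansive_homeo X f"
  shows "\<exists>\<delta> D. local_metric X \<delta> D \<and> catenary X f \<delta> D"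
proof -
  obtain g e where "homeomorphism X X f g" and e_pos: "0 < e"
    and expansive: "\<forall>x\<in>X. \<forall>y\<in>X. (\<forall>n::int. dist (zpow X f n x) (zpow X f n y) \<le> e) \<longrightarrow> x = y"
    using assms(2) unfolding expansive_homeo_def by blast
  from \<open>homeomorphism X X f g\<close> have homeo: "homeomorphism X X f (inv_into X f)"
    by (rule homeomorphism_inv_into)
  obtain l :: real where l: "0 < l" "l < 1" "l + 1 / l = 3"
    using exists_catenary_weight by blast
  have bounded: "bounded X"
    using assms(1) by (rule compact_imp_bounded)
  define D where "D = two_sided_orbit_sum l (e / 2) f (inv_into X f)"
  have "local_metric X (e / 2) D"
    unfolding D_def using e_pos expansive_separates_orbits[OF expansive]
    by (intro local_metric_two_sided_orbit_sum[OF bounded homeo l(1,2)]) simp_all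
  moreover have "catenary X f (e / 2) D"
    unfolding D_def by (rule catenary_two_sided_orbit_sum[OF bounded homeo l])
  ultimately show ?thesis
    by blast
qed

end
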